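(* Fix integers $N\ge 2$ and $K\ge 1$. The class $M^{\text{TransE}}$ is not universal, i.e. $\pi(\mathcal{M}^{\text{TransE}})\ne\pi(\mathbb{R}^{N\times N\times K})$.
   Context: There are $N$ entities and $K$ relations. A score-based model assigns a score $s_k(i,j)\in\mathbb{R}$ to each triple, $i,j\in\{1,\dots,N\}$, $k\in\{1,\dots,K\}$; its scoring tensor $\mathcal{S}\in\mathbb{R}^{N\times N\times K}$ has frontal slices $\mathbf{S}_k$ with $[\mathbf{S}_k]_{ij}=s_k(i,j)$. For a real $N\times N$ matrix $\mathbf{S}$, $\pi(\mathbf{S})$ is the matrix of dense ranks: $\pi_{ij}(\mathbf{S})=1+$ (number of distinct values among entries of $\mathbf{S}$ strictly larger than $s_{ij}$). For tensors, $\pi$ acts slicewise; for a set $X$, $\pi(X)=\{\pi(x):x\in X\}$; thus $\pi(\mathbb{R}^{N\times N\times K})$ is the set of all ranking tensors. TransE of size $r$: parameters $\mathbf{A}\in\mathbb{R}^{N\times r}$ (rows $\mathbf{a}_i$), $\mathbf{R}\in\mathbb{R}^{K\times r}$ (rows $\mathbf{r}_k$), score $-\|\mathbf{a}_i+\mathbf{r}_k-\mathbf{a}_j\|_2^2$. $\mathcal{M}^{\text{TransE}}$ is the set of scoring tensors of all TransE models of all sizes $r\in\mathbb{N}^+$. A class is universal if it can represent every ranking tensor. *)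

theory Defs
  imports Complex_Main
begin

text \<open>A scoring tensor in R^(N x N x K) is represented as a function
  S :: nat => nat => nat => real, with S i j k = [S_k]_ij for
  i, j in {1..N}, k in {1..K}; values outside that range are irrelevant.\<close>

type_synonym score_tensor = "nat \<Rightarrow> nat \<Rightarrow> nat \<Rightarrow> real"
type_synonym rank_tensor = "nat \<Rightarrow> nat \<Rightarrow> nat \<Rightarrow> nat"

definition dense_rank :: "nat \<Rightarrow> nat \<Rightarrow> score_tensor \<Rightarrow> rank_tensor" where
  "dense_rank N K S = (\<lambda>i j k.
     if i \<in> {1..N} \<and> j \<in> {1..N} \<and> k \<in> {1..K} then
       1 + card {v. \<exists>i'\<in>{1..N}. \<exists>j'\<in>{1..N}. v = S i' j' k \<and> v > S i j k}
     else 0)"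

definition transE_tensor ::
  "nat \<Rightarrow> (nat \<Rightarrow> nat \<Rightarrow> real) \<Rightarrow> (nat \<Rightarrow> nat \<Rightarrow> real) \<Rightarrow> score_tensor" where
  "transE_tensor r A R = (\<lambda>i j k. - (\<Sum>l\<in>{1..r}. (A i l + R k l - A j l)\<^sup>2))"

definition M_TransE :: "score_tensor set" where
  "M_TransE = {S. \<exists>r::nat. r \<ge> 1 \<and> (\<exists>A R. S = transE_tensor r A R)}"

end

theory Submission
  imports Defs
begin

text \<open>Every TransE model scores all self-loops (i, k, i) of a relation k equally,
  namely by -|r_k|^2, so its ranking tensor has equal ranks on the diagonal of each
  slice. A score tensor that prefers (1, k, 1) to (2, k, 2) has a ranking tensor
  without this property, hence one that no TransE model represents.\<close>

lemma transE_tensor_diagonal: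
  "transE_tensor r A R i i k = transE_tensor r A R j j k"
  by (simp add: transE_tensor_def)

lemma dense_rank_eq_if_score_eq:
  assumes "i \<in> {1..N}" "j \<in> {1..N}" "i' \<in> {1..N}" "j' \<in> {1..N}" "k \<in> {1..K}"
    and "S i j k = S i' j' k"
  shows "dense_rank N K S i j k = dense_rank N K S i' j' k"
  using assms by (simp add: dense_rank_def)

lemma dense_rank_less_if_score_greater:
  assumes "i \<in> {1..N}" "j \<in> {1..N}" "i' \<in> {1..N}" "j' \<in> {1..N}" "k \<in> {1..K}"
    and "S i j k > S i' j' k"
  shows "dense_rank N K S i j k < dense_rank N K S i' j' k"
proof -
  define above where
    "above a b = {v. \<exists>i''\<in>{1..N}. \<exists>j''\<in>{1..N}. v = S i'' j'' k \<and> v > S a b k}" for a b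
  have "above a b \<subseteq> (\<lambda>(i'', j''). S i'' j'' k) ` ({1..N} \<times> {1..N})" for a b
    by (auto simp: above_def)
  then have finite: "finite (above i' j')"
    by (meson finite_SigmaI finite_atLeastAtMost finite_imageI finite_subset)
  have "above i j \<subset> above i' j'"
  proof
    show "above i j \<subseteq> above i' j'"
      using assms(6) by (auto simp: above_def)
    have "S i j k \<in> above i' j'"
      using assms unfolding above_def by blast
    moreover have "S i j k \<notin> above i j"
      by (simp add: above_def)
    ultimately show "above i j \<noteq> above i' j'"
      by blast
  qed
  then have "card (above i j) < card (above i' j')"
    using finite by (rule psubset_card_mono[rotated])
  moreover have "dense_rank N K S a b k = 1 + card (above a b)"
    if "a \<in> {1..N}" "b \<in> {1..N}" for a b
    using that assms(5) unfolding dense_rank_def above_def by (simp only: conj_absorb if_True)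
  ultimately show ?thesis
    using assms(1-4) by simp
qed

theorem corollary2:
  fixes N K :: nat
  assumes "N \<ge> 2" and "K \<ge> 1"
  shows "dense_rank N K ` M_TransE \<noteq> dense_rank N K ` (UNIV :: score_tensor set)"
proof
  assume eq: "dense_rank N K ` M_TransE = dense_rank N K ` (UNIV :: score_tensor set)"
  define T :: score_tensor where "T = (\<lambda>i j k. if i = 1 \<and> j = 1 then 1 else 0)"
  have in_range: "1 \<in> {1..N}" "2 \<in> {1..N}" "1 \<in> {1..K}"
    using assms by auto
  have T_ranks: "dense_rank N K T 1 1 1 < dense_rank N K T 2 2 1"
    using in_range by (intro dense_rank_less_if_score_greater) (auto simp: T_def)
  have "dense_rank N K T \<in> dense_rank N K ` M_TransE"
    using eq by simp
  then obtain r A R where "dense_rank N K (transE_tensor r A R) = dense_rank N K T"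
    unfolding M_TransE_def by (auto elim!: imageE)
  moreover have "dense_rank N K (transE_tensor r A R) 1 1 1 = dense_rank N K (transE_tensor r A R) 2 2 1"
    using in_range by (intro dense_rank_eq_if_score_eq transE_tensor_diagonal)
  ultimately show False
    using T_ranks by simp
qed

end
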